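(* Let $u_1=(1,0)$, $u_2=(0,1)$, $u_3=(1,1)$ in $\mathbb{Z}^2$, $S=\{\pm u_1,\pm u_2,\pm u_3\}$, and $\mathcal{P}=\{P_\alpha\}_{\alpha\in S}$ on $\mathbb{C}^6$ with $P_{u_i}=P_{2i-1}$, $P_{-u_i}=P_{2i}$ ($i=1,2,3$). Then $U(S,\mathcal{P},G_6)$ acting on $\ell^2(\mathbb{Z}^2,\mathbb{C}^6)$ has both $1$ and $-1$ as eigenvalues.
   Context: $P_j$ is the orthogonal projection of $\mathbb{C}^6$ onto $\mathbb{C}\mathbf{e}_j$, $\mathbf{e}_j$ the standard basis. $(\tau^\alpha f)(x)=f(x-\alpha)$, $U(S,\mathcal{P},C)=\big(\sum_{\alpha\in S}\tau^\alpha P_\alpha\big)C$ with $C$ acting pointwise. $G_6=\frac26J-I$, $J$ the $6\times6$ all-ones matrix. Eigenvalue means point spectrum. *)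

theory Defs
  imports "HOL-Analysis.Analysis"
begin

definition l2 :: "(int \<times> int \<Rightarrow> complex^6) \<Rightarrow> bool" where
  "l2 f \<longleftrightarrow> (\<lambda>x. (norm (f x))\<^sup>2) summable_on UNIV"

definition shift :: "int \<times> int \<Rightarrow> (int \<times> int \<Rightarrow> 'a) \<Rightarrow> (int \<times> int \<Rightarrow> 'a)" where
  "shift \<alpha> f = (\<lambda>x. f (x - \<alpha>))"

definition projP :: "6 \<Rightarrow> complex^6^6" where
  "projP j = (\<chi> a b. if a = j \<and> b = j then 1 else 0)"

definition Uop :: "(int \<times> int) set \<Rightarrow> (int \<times> int \<Rightarrow> complex^6^6) \<Rightarrow> complex^6^6
    \<Rightarrow> (int \<times> int \<Rightarrow> complex^6) \<Rightarrow> (int \<times> int \<Rightarrow> complex^6)" where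
  "Uop S P C f = (\<lambda>x. \<Sum>\<alpha>\<in>S. shift \<alpha> (\<lambda>y. P \<alpha> *v (C *v f y)) x)"

definition G6 :: "complex^6^6" where
  "G6 = (\<chi> a b. 2/6) - mat 1"

definition is_eigenvalue :: "((int \<times> int \<Rightarrow> complex^6) \<Rightarrow> (int \<times> int \<Rightarrow> complex^6)) \<Rightarrow> complex \<Rightarrow> bool" where
  "is_eigenvalue T c \<longleftrightarrow> (\<exists>f. l2 f \<and> f \<noteq> (\<lambda>x. 0) \<and> T f = (\<lambda>x. c *s f x))"

definition u1 :: "int \<times> int" where "u1 = (1, 0)"
definition u2 :: "int \<times> int" where "u2 = (0, 1)"
definition u3 :: "int \<times> int" where "u3 = (1, 1)"

definition S6 :: "(int \<times> int) set" where
  "S6 = {u1, -u1, u2, -u2, u3, -u3}"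

text \<open>P_{u_i} = P_{2i-1}, P_{-u_i} = P_{2i}; components of 6 are indexed 1..6 (6 = 0 in the numeral type).\<close>
definition Pfam :: "int \<times> int \<Rightarrow> complex^6^6" where
  "Pfam \<alpha> = (if \<alpha> = u1 then projP 1 else if \<alpha> = -u1 then projP 2
     else if \<alpha> = u2 then projP 3 else if \<alpha> = -u2 then projP 4
     else if \<alpha> = u3 then projP 5 else if \<alpha> = -u3 then projP 6 else 0)"

end

theory Submission
  imports Defs
begin

text \<open>Since each \<open>P\<^sub>\<alpha>\<close> projects onto a single coordinate, the \<open>j\<close>-th coordinate of \<open>U f\<close> at \<open>y\<close>
  is the \<open>j\<close>-th coordinate of \<open>G\<^sub>6 f(y - d\<^sub>j)\<close>, where \<open>d\<^sub>j\<close> is the direction \<open>\<alpha>\<close> with \<open>P\<^sub>\<alpha> = P\<^sub>j\<close>.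
  So \<open>f(y)\<^sub>j\<close> can be read as an amplitude on the directed edge from \<open>y - d\<^sub>j\<close> to \<open>y\<close> of the
  triangular lattice, and \<open>G\<^sub>6\<close> scatters the amplitudes arriving at a vertex. Eigenvectors for \<open>\<plusminus>1\<close>
  can then be supported on the edges inside the hexagon formed by the origin and its six neighbours:
  all amplitudes \<open>1\<close> for the eigenvalue \<open>1\<close>, and signs alternating around the hexagon for the
  eigenvalue \<open>-1\<close>. Both are finitely supported, so the eigen-equation becomes a finite check.\<close>

lemma exhaust_6:
  fixes x :: 6
  obtains "x = 1" | "x = 2" | "x = 3" | "x = 4" | "x = 5" | "x = 6"
proof (induct x)
  case (of_int z)
  then have "z = 0 \<or> z = 1 \<or> z = 2 \<or> z = 3 \<or> z = 4 \<or> z = 5" by fastforce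
  then show ?case using of_int by auto
qed

lemma UNIV_6: "(UNIV :: 6 set) = {1, 2, 3, 4, 5, 6}"
proof -
  have "x \<in> {1, 2, 3, 4, 5, 6}" for x :: 6
    by (cases x rule: exhaust_6) auto
  then show ?thesis by blast
qed

lemma sum_UNIV_6: "sum f (UNIV :: 6 set) = f 1 + f 2 + f 3 + f 4 + f 5 + f 6"
  unfolding UNIV_6 by (simp add: add.assoc)

lemma projP_mult_component: "(projP i *v w) $ j = (if i = j then w $ j else 0)"
proof -
  have "projP i $ j $ k * w $ k = (if k = j then (if i = j then w $ j else 0) else 0)" for k
    by (simp add: projP_def)
  then show ?thesis
    by (simp add: matrix_vector_mult_def)
qed

lemma Uop_projections_component:
  fixes d :: "6 \<Rightarrow> int \<times> int"
  assumes "inj d" and "\<And>k. P (d k) = projP k"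
  shows "Uop (range d) P C f x $ j = (C *v f (x - d j)) $ j"
proof -
  have "Uop (range d) P C f x = (\<Sum>k\<in>UNIV. projP k *v (C *v f (x - d k)))"
    using assms by (simp add: Uop_def shift_def sum.reindex)
  then show ?thesis
    by (simp add: projP_mult_component)
qed

lemma G6_mult_component: "(G6 *v v) $ j = (\<Sum>k\<in>UNIV. v $ k) / 3 - v $ j"
proof -
  have "(G6 *v v) $ j = (\<Sum>k\<in>UNIV. v $ k / 3 - (if k = j then v $ j else 0))"
    unfolding G6_def matrix_vector_mult_def mat_def by (auto intro!: sum.cong)
  then show ?thesis
    by (simp add: sum_subtractf sum_divide_distrib)
qed

definition dv :: "6 \<Rightarrow> int \<times> int" where
  "dv k = (if k = 1 then u1 else if k = 2 then -u1 else if k = 3 then u2 else if k = 4 then -u2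
     else if k = 5 then u3 else -u3)"

lemma dv_simps [simp]:
  "dv 1 = (1, 0)" "dv 2 = (-1, 0)" "dv 3 = (0, 1)" "dv 4 = (0, -1)" "dv 5 = (1, 1)" "dv 6 = (-1, -1)"
  by (simp_all add: dv_def u1_def u2_def u3_def)

lemma range_dv: "range dv = S6"
  by (simp add: UNIV_6 S6_def u1_def u2_def u3_def)

lemma inj_dv: "inj dv"
  unfolding inj_def by (intro allI; case_tac x rule: exhaust_6; case_tac y rule: exhaust_6) simp_all

lemma Pfam_dv: "Pfam (dv k) = projP k"
  by (cases k rule: exhaust_6) (simp_all add: Pfam_def u1_def u2_def u3_def)

lemma Uop_S6_component: "Uop S6 Pfam G6 f x $ j = (\<Sum>k\<in>UNIV. f (x - dv j) $ k) / 3 - f (x - dv j) $ j"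
  using Uop_projections_component[OF inj_dv Pfam_dv]
  by (simp add: range_dv G6_mult_component)

lemma l2_if_finite_support: "finite {x. f x \<noteq> 0} \<Longrightarrow> l2 f"
  unfolding l2_def by (rule finite_nonzero_values_imp_summable_on) simp

definition hexagon :: "(int \<times> int) set" where
  "hexagon = insert 0 S6"

text \<open>\<open>hexagon_edge y j\<close> says that the edge from \<open>y - dv j\<close> to \<open>y\<close>, which carries the amplitude
  \<open>f y $ j\<close>, lies inside the hexagon.\<close>

definition hexagon_edge :: "int \<times> int \<Rightarrow> 6 \<Rightarrow> bool" where
  "hexagon_edge y j \<longleftrightarrow> y \<in> hexagon \<and> y - dv j \<in> hexagon"

text \<open>In the cyclic order \<open>u\<^sub>1, u\<^sub>3, u\<^sub>2, -u\<^sub>1, -u\<^sub>3, -u\<^sub>2\<close> of the neighbours of the origin this sign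
  alternates.\<close>

definition hexagon_sign :: "int \<times> int \<Rightarrow> complex" where
  "hexagon_sign \<alpha> = (if \<alpha> \<in> {u1, u2, -u3} then -1 else 1)"

definition eigvec_one :: "int \<times> int \<Rightarrow> complex^6" where
  "eigvec_one y = (\<chi> j. if hexagon_edge y j then 1 else 0)"

text \<open>An edge ending at a neighbour carries the sign of that neighbour; an edge from \<open>-dv j\<close> into the
  origin carries the sign of the opposite neighbour \<open>dv j\<close>.\<close>

definition eigvec_minus_one :: "int \<times> int \<Rightarrow> complex^6" where
  "eigvec_minus_one y =
    (\<chi> j. if hexagon_edge y j then hexagon_sign (if y = 0 then dv j else y) else 0)"

lemma hexagon_eq: "hexagon = {0, (1, 0), (-1, 0), (0, 1), (0, -1), (1, 1), (-1, -1)}"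
  by (simp add: hexagon_def S6_def u1_def u2_def u3_def)

lemma zero_in_hexagon: "0 \<in> hexagon"
  by (simp add: hexagon_def)

lemma Pair_eq_zero_iff: "(a, b) = 0 \<longleftrightarrow> a = 0 \<and> b = 0"
  by (simp add: zero_prod_def)

lemma mem_hexagon_iff: "(a, b) \<in> hexagon \<longleftrightarrow> \<bar>a\<bar> \<le> 1 \<and> \<bar>b\<bar> \<le> 1 \<and> \<bar>a - b\<bar> \<le> 1"
proof
  assume "(a, b) \<in> hexagon"
  then show "\<bar>a\<bar> \<le> 1 \<and> \<bar>b\<bar> \<le> 1 \<and> \<bar>a - b\<bar> \<le> 1"
    by (auto simp: hexagon_eq Pair_eq_zero_iff)
next
  assume bounds: "\<bar>a\<bar> \<le> 1 \<and> \<bar>b\<bar> \<le> 1 \<and> \<bar>a - b\<bar> \<le> 1"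
  then have "a \<in> {-1, 0, 1}" and "b \<in> {-1, 0, 1}"
    by auto
  then show "(a, b) \<in> hexagon"
    using bounds by (elim insertE emptyE) (simp_all add: hexagon_eq Pair_eq_zero_iff)
qed

lemma hexagon_sign_Pair:
  "hexagon_sign (a, b) = (if (a, b) \<in> {(1, 0), (0, 1), (-1, -1)} then -1 else 1)"
  by (simp add: hexagon_sign_def u1_def u2_def u3_def)

text \<open>Outside the hexagon both sides of the eigen-equation vanish, so only the seven vertices
  \<open>z = y - dv j\<close> of the hexagon have to be checked.\<close>

lemma is_eigenvalue_if_hexagon_equation:
  fixes f :: "int \<times> int \<Rightarrow> complex^6"
  assumes edge_support: "\<And>z k. \<not> hexagon_edge z k \<Longrightarrow> f z $ k = 0"
    and on_hexagon: "\<And>z j. z \<in> hexagon \<Longrightarrow>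
      (\<Sum>k\<in>UNIV. f z $ k) / 3 - f z $ j = c * f (z + dv j) $ j"
    and "f 0 \<noteq> 0"
  shows "is_eigenvalue (Uop S6 Pfam G6) c"
  unfolding is_eigenvalue_def
proof (intro exI conjI)
  have support: "f z = 0" if "z \<notin> hexagon" for z
    using that edge_support by (simp add: hexagon_edge_def vec_eq_iff)
  have eigen_equation: "(\<Sum>k\<in>UNIV. f (y - dv j) $ k) / 3 - f (y - dv j) $ j = c * f y $ j" for y j
  proof (cases "y - dv j \<in> hexagon")
    case True
    then show ?thesis
      using on_hexagon[of "y - dv j" j] by simp
  next
    case False
    then show ?thesis
      using support edge_support[of y j] by (simp add: hexagon_edge_def)
  qed
  have "{z. f z \<noteq> 0} \<subseteq> hexagon"
    using support by blast
  then show "l2 f"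
    by (intro l2_if_finite_support) (auto intro: finite_subset simp: hexagon_eq)
  show "f \<noteq> (\<lambda>z. 0)"
    using \<open>f 0 \<noteq> 0\<close> by auto
  show "Uop S6 Pfam G6 f = (\<lambda>y. c *s f y)"
    using eigen_equation by (simp add: fun_eq_iff vec_eq_iff Uop_S6_component)
qed

lemma eigvec_one_on_hexagon:
  assumes "z \<in> hexagon"
  shows "(\<Sum>k\<in>UNIV. eigvec_one z $ k) / 3 - eigvec_one z $ j = 1 * eigvec_one (z + dv j) $ j"
  using assms unfolding hexagon_eq
  by (cases j rule: exhaust_6; elim insertE emptyE;
      simp add: eigvec_one_def hexagon_edge_def mem_hexagon_iff zero_in_hexagon sum_UNIV_6)

lemma eigvec_minus_one_on_hexagon:
  assumes "z \<in> hexagon"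
  shows "(\<Sum>k\<in>UNIV. eigvec_minus_one z $ k) / 3 - eigvec_minus_one z $ j
    = -1 * eigvec_minus_one (z + dv j) $ j"
  using assms unfolding hexagon_eq
  by (cases j rule: exhaust_6; elim insertE emptyE;
      simp add: eigvec_minus_one_def hexagon_edge_def mem_hexagon_iff zero_in_hexagon
        hexagon_sign_Pair Pair_eq_zero_iff sum_UNIV_6)

lemma eigvec_one_edge_support: "\<not> hexagon_edge z k \<Longrightarrow> eigvec_one z $ k = 0"
  by (simp add: eigvec_one_def)

lemma eigvec_minus_one_edge_support: "\<not> hexagon_edge z k \<Longrightarrow> eigvec_minus_one z $ k = 0"
  by (simp add: eigvec_minus_one_def)

lemma hexagon_edge_zero_one: "hexagon_edge 0 1"
  by (simp add: hexagon_edge_def zero_in_hexagon mem_hexagon_iff)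

lemma eigvec_one_nonzero: "eigvec_one 0 \<noteq> 0"
  using hexagon_edge_zero_one by (auto simp: eigvec_one_def vec_eq_iff)

lemma eigvec_minus_one_nonzero: "eigvec_minus_one 0 \<noteq> 0"
  using hexagon_edge_zero_one by (auto simp: eigvec_minus_one_def hexagon_sign_def u1_def vec_eq_iff)

theorem corollary4p2:
  shows "is_eigenvalue (Uop S6 Pfam G6) 1 \<and> is_eigenvalue (Uop S6 Pfam G6) (-1)"
  using is_eigenvalue_if_hexagon_equation
      [OF eigvec_one_edge_support eigvec_one_on_hexagon eigvec_one_nonzero]
    is_eigenvalue_if_hexagon_equation
      [OF eigvec_minus_one_edge_support eigvec_minus_one_on_hexagon eigvec_minus_one_nonzero]
  by blast

end
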